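(* Let $l,t,s,n$ be integers with $n\geq 2s+1$, $2\leq l\leq t$ and $s\geq l+1$. Then $$ex(n,\{K_{l,t},M_{s+1}\},l-1)\leq (l-1)n+ex(2(s-l+1)+1,K_{l,t})-\frac{l(l-1)}{2}.$$
   Context: All graphs are finite and simple. $ex(m,K_{l,t})$ is the maximum number of edges of an $m$-vertex graph with no copy of the complete bipartite graph $K_{l,t}$; $M_{s+1}$ is the matching of $s+1$ disjoint edges. For a graph $G$ with matching number at most $s$, say $X\subseteq V(G)$ is admissible if $|X|+\sum_{i=1}^m\lfloor |V(C_i)|/2\rfloor\leq s$, where $C_1,\dots,C_m$ are the components of $G-X$; let $x(G)$ be the maximum size of an admissible set. Let $\mathscr{G}_x$ be the set of graphs on $n$ vertices containing neither $K_{l,t}$ nor $M_{s+1}$ as a subgraph and with $x(G)=x$, and $ex(n,\{K_{l,t},M_{s+1}\},x)=\max_{G\in\mathscr{G}_x}e(G)$. *)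

theory Defs
  imports Main
begin

definition simple_graph :: "'a set \<Rightarrow> 'a set set \<Rightarrow> bool" where
  "simple_graph V E \<longleftrightarrow> finite V \<and> (\<forall>e\<in>E. e \<subseteq> V \<and> card e = 2)"

definition contains_Klt :: "'a set \<Rightarrow> 'a set set \<Rightarrow> nat \<Rightarrow> nat \<Rightarrow> bool" where
  "contains_Klt V E l t \<longleftrightarrow>
     (\<exists>A B. A \<subseteq> V \<and> B \<subseteq> V \<and> A \<inter> B = {} \<and> card A = l \<and> card B = t \<and>
            (\<forall>a\<in>A. \<forall>b\<in>B. {a, b} \<in> E))"

definition contains_matching :: "'a set set \<Rightarrow> nat \<Rightarrow> bool" where
  "contains_matching E k \<longleftrightarrow>
     (\<exists>M. M \<subseteq> E \<and> finite M \<and> card M = k \<and> (\<forall>e\<in>M. \<forall>f\<in>M. e \<noteq> f \<longrightarrow> e \<inter> f = {}))"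

definition adj_minus :: "'a set \<Rightarrow> 'a set set \<Rightarrow> 'a set \<Rightarrow> ('a \<times> 'a) set" where
  "adj_minus V E X = {(a, b). a \<in> V - X \<and> b \<in> V - X \<and> {a, b} \<in> E}"

definition component :: "'a set \<Rightarrow> 'a set set \<Rightarrow> 'a set \<Rightarrow> 'a \<Rightarrow> 'a set" where
  "component V E X v = {u. (v, u) \<in> (adj_minus V E X)\<^sup>*}"

definition components :: "'a set \<Rightarrow> 'a set set \<Rightarrow> 'a set \<Rightarrow> 'a set set" where
  "components V E X = component V E X ` (V - X)"

definition admissible :: "'a set \<Rightarrow> 'a set set \<Rightarrow> nat \<Rightarrow> 'a set \<Rightarrow> bool" where
  "admissible V E s X \<longleftrightarrow>
     X \<subseteq> V \<and> card X + (\<Sum>C\<in>components V E X. card C div 2) \<le> s"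

definition xG :: "'a set \<Rightarrow> 'a set set \<Rightarrow> nat \<Rightarrow> nat" where
  "xG V E s = Max {card X | X. admissible V E s X}"

definition ex_Klt :: "nat \<Rightarrow> nat \<Rightarrow> nat \<Rightarrow> nat" where
  "ex_Klt m l t = Max {card E | E. simple_graph {0..<m} E \<and> \<not> contains_Klt {0..<m} E l t}"

end

theory Submission
  imports Defs
begin

text \<open>Let \<open>X\<close> be an admissible set of the maximal size \<open>x(G) = l - 1\<close>; one exists because
  \<open>\<nu>(G) \<le> s\<close> and the Tutte--Berge formula provides a set \<open>X\<close> with
  \<open>|X| + \<Sum>\<lfloor>|C|/2\<rfloor> \<le> \<nu>(G)\<close>. At most \<open>(l - 1) n - l (l - 1) / 2\<close> edges meet \<open>X\<close>. The
  components \<open>C\<close> of \<open>G - X\<close> satisfy \<open>\<Sum>\<lfloor>|C|/2\<rfloor> \<le> s - l + 1\<close>, so identifying one vertex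
  of each component leaves at most \<open>2 (s - l + 1) + 1\<close> vertices and loses no edge. As
  \<open>l, t \<ge> 2\<close>, a copy of \<open>K\<^sub>l\<^sub>,\<^sub>t\<close> in the glued graph would lift to one inside a single
  component, so \<open>G - X\<close> has at most \<open>ex(2 (s - l + 1) + 1, K\<^sub>l\<^sub>,\<^sub>t)\<close> edges.\<close>

lemma card_2_doubletonE:
  assumes "card e = 2" "x \<in> e"
  obtains y where "y \<noteq> x" "e = {x, y}"
  using assms by (metis card_2_iff doubleton_eq_iff insert_iff singletonD)

lemma adj_minus_sym: "sym (adj_minus V E X)"
  unfolding adj_minus_def sym_def by (auto simp: insert_commute)

lemma component_refl: "v \<in> component V E X v"
  unfolding component_def by simp

lemma component_sym: "u \<in> component V E X v \<Longrightarrow> v \<in> component V E X u"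
  using sym_rtrancl[OF adj_minus_sym, of V E X] unfolding component_def sym_def by blast

lemma component_eq: "u \<in> component V E X v \<Longrightarrow> component V E X u = component V E X v"
proof -
  assume "u \<in> component V E X v"
  moreover from this have "v \<in> component V E X u" by (rule component_sym)
  ultimately have "(v, u) \<in> (adj_minus V E X)\<^sup>*" "(u, v) \<in> (adj_minus V E X)\<^sup>*"
    unfolding component_def by simp_all
  then show ?thesis unfolding component_def
    by (intro set_eqI iffI) (simp_all add: rtrancl_trans[of u v] rtrancl_trans[of v u])
qed

lemma component_of_mem: "C \<in> components V E X \<Longrightarrow> a \<in> C \<Longrightarrow> C = component V E X a"
  unfolding components_def by (auto simp: component_eq)

lemma component_subset: "v \<in> V - X \<Longrightarrow> component V E X v \<subseteq> V - X"
proof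
  fix u assume "v \<in> V - X" "u \<in> component V E X v"
  then have "(v, u) \<in> (adj_minus V E X)\<^sup>*" "v \<in> V - X" unfolding component_def by auto
  then show "u \<in> V - X"
    by (induction rule: rtrancl_induct) (auto simp: adj_minus_def)
qed

lemma edge_in_component:
  "{a, b} \<in> E \<Longrightarrow> a \<in> V - X \<Longrightarrow> b \<in> V - X \<Longrightarrow> b \<in> component V E X a"
  unfolding component_def adj_minus_def by auto

lemma finite_components: "finite V \<Longrightarrow> finite (components V E X)"
  unfolding components_def by simp

lemma finite_component: "finite V \<Longrightarrow> C \<in> components V E X \<Longrightarrow> finite C"
  unfolding components_def by (auto intro: finite_subset[OF component_subset])

lemma Union_components: "\<Union>(components V E X) = V - X"
proof
  show "\<Union>(components V E X) \<subseteq> V - X"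
    unfolding components_def by (simp add: UN_subset_iff component_subset)
  show "V - X \<subseteq> \<Union>(components V E X)"
    unfolding components_def by (auto intro: component_refl)
qed

lemma components_disjoint:
  "C \<in> components V E X \<Longrightarrow> D \<in> components V E X \<Longrightarrow> C \<noteq> D \<Longrightarrow> C \<inter> D = {}"
  by (metis component_of_mem disjoint_iff)

lemma components_Diff_insert: "components (V - {v}) E X = components V E (insert v X)"
proof -
  have "adj_minus (V - {v}) E X = adj_minus V E (insert v X)" unfolding adj_minus_def by auto
  moreover have "V - {v} - X = V - insert v X" by auto
  ultimately show ?thesis unfolding components_def component_def by simp
qed

lemma edge_subset_component:
  assumes "e \<in> E" "card e = 2" "e \<subseteq> V - X" "a \<in> e"
  shows "e \<subseteq> component V E X a"
proof -
  obtain b where "e = {a, b}" using assms(2,4) by (rule card_2_doubletonE)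
  then show ?thesis using assms edge_in_component[of a b E V X] component_refl by auto
qed

lemma sum_card_Int_components:
  assumes "finite V" "S \<subseteq> V - X"
  shows "(\<Sum>C\<in>components V E X. card (C \<inter> S)) = card S"
proof -
  have "\<forall>C\<in>components V E X. \<forall>D\<in>components V E X. C \<noteq> D \<longrightarrow> C \<inter> S \<inter> (D \<inter> S) = {}"
    using components_disjoint by fastforce
  then have "card (\<Union>C\<in>components V E X. C \<inter> S) = (\<Sum>C\<in>components V E X. card (C \<inter> S))"
    using assms(1) finite_component[OF assms(1)]
    by (intro card_UN_disjoint finite_components) simp_all
  moreover have "(\<Union>C\<in>components V E X. C \<inter> S) = S"
    using Union_components[of V E X] assms(2) by blast
  ultimately show ?thesis by simp
qed

lemma sum_card_components:
  assumes "finite V" shows "(\<Sum>C\<in>components V E X. card C) = card (V - X)"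
proof -
  have "C \<inter> (V - X) = C" if "C \<in> components V E X" for C
    using that Union_components[of V E X] by blast
  then show ?thesis using sum_card_Int_components[OF assms, of "V - X" X E] by simp
qed


text \<open>Matchings of the graph induced on \<open>V\<close>: the Tutte--Berge induction below deletes vertices
  but keeps the edge set \<open>E\<close>.\<close>
definition matching :: "'a set \<Rightarrow> 'a set set \<Rightarrow> 'a set set \<Rightarrow> bool" where
  "matching V E M \<longleftrightarrow> M \<subseteq> E \<and> (\<forall>e\<in>M. e \<subseteq> V) \<and> (\<forall>e\<in>M. \<forall>f\<in>M. e \<noteq> f \<longrightarrow> e \<inter> f = {})"

definition matching_number :: "'a set \<Rightarrow> 'a set set \<Rightarrow> nat" where
  "matching_number V E = Max {card M | M. matching V E M}"

definition maximum_matching :: "'a set \<Rightarrow> 'a set set \<Rightarrow> 'a set set \<Rightarrow> bool" where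
  "maximum_matching V E M \<longleftrightarrow> matching V E M \<and> card M = matching_number V E"

lemma matching_subset_Pow: "matching V E M \<Longrightarrow> M \<subseteq> Pow V"
  unfolding matching_def by auto

lemma finite_matching: "finite V \<Longrightarrow> matching V E M \<Longrightarrow> finite M"
  by (meson finite_Pow_iff finite_subset matching_subset_Pow)

lemma finite_Union_matching: "finite V \<Longrightarrow> matching V E M \<Longrightarrow> finite (\<Union>M)"
  by (meson Union_least PowD finite_subset matching_subset_Pow subsetD)

lemma matching_subset: "matching V E M \<Longrightarrow> N \<subseteq> M \<Longrightarrow> matching V E N"
  unfolding matching_def by (meson subset_iff)

lemma matching_insert:
  "matching V E M \<Longrightarrow> e \<in> E \<Longrightarrow> e \<subseteq> V \<Longrightarrow> e \<inter> \<Union>M = {} \<Longrightarrow> matching V E (insert e M)"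
  unfolding matching_def by auto

lemma finite_matching_cards: "finite V \<Longrightarrow> finite {card M | M. matching V E M}"
proof -
  assume "finite V"
  moreover have "{card M | M. matching V E M} \<subseteq> card ` Pow (Pow V)"
    by (auto intro!: imageI dest: matching_subset_Pow)
  ultimately show ?thesis by (meson finite_Pow_iff finite_imageI finite_subset)
qed

lemma card_le_matching_number:
  "finite V \<Longrightarrow> matching V E M \<Longrightarrow> card M \<le> matching_number V E"
  unfolding matching_number_def by (rule Max_ge[OF finite_matching_cards]) blast+

lemma maximum_matching_exists:
  assumes "finite V" obtains M where "maximum_matching V E M"
proof -
  have "matching V E {}" unfolding matching_def by simp
  then have "{card M | M. matching V E M} \<noteq> {}" by blast
  then have "matching_number V E \<in> {card M | M. matching V E M}"
    unfolding matching_number_def by (rule Max_in[OF finite_matching_cards[OF assms]])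
  then obtain M where "matching V E M" "card M = matching_number V E" by auto
  with that show ?thesis unfolding maximum_matching_def by simp
qed

lemma card_Union_matching:
  assumes "finite V" "\<forall>e\<in>E. card e = 2" "matching V E M"
  shows "card (\<Union>M) = 2 * card M"
proof -
  have "\<forall>e\<in>M. card e = 2" using assms(2,3) unfolding matching_def by blast
  moreover have "pairwise disjnt M" using assms(3) unfolding matching_def pairwise_def disjnt_def by blast
  ultimately have "card (\<Union>M) = (\<Sum>e\<in>M. card e)"
    by (intro card_Union_disjoint) (simp_all add: card_ge_0_finite)
  also have "\<dots> = 2 * card M" using \<open>\<forall>e\<in>M. card e = 2\<close> by simp
  finally show ?thesis .
qed

lemma maximum_matching_covers_edge:
  assumes "finite V" "maximum_matching V E M" "{a, b} \<in> E" "a \<in> V" "b \<in> V" "a \<notin> \<Union>M"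
  shows "b \<in> \<Union>M"
proof (rule ccontr)
  assume "b \<notin> \<Union>M"
  then have "matching V E (insert {a, b} M)"
    using assms by (intro matching_insert) (auto simp: maximum_matching_def)
  moreover have "{a, b} \<notin> M" using assms(6) by blast
  ultimately have "Suc (card M) \<le> matching_number V E"
    using card_le_matching_number[OF assms(1)] finite_matching[OF assms(1)] by fastforce
  then show False using assms(2) unfolding maximum_matching_def by simp
qed

lemma matching_edges_eq:
  "matching V E M \<Longrightarrow> e \<in> M \<Longrightarrow> f \<in> M \<Longrightarrow> x \<in> e \<Longrightarrow> x \<in> f \<Longrightarrow> e = f"
  unfolding matching_def by blast

text \<open>Trading the edge of \<open>N\<close> at the \<open>M\<close>-partner of \<open>t\<close> for the edge of \<open>M\<close> at \<open>t\<close>.\<close>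
lemma maximum_matching_exchange:
  assumes fin: "finite V" and E2: "\<forall>e\<in>E. card e = 2"
    and M: "maximum_matching V E M" and N: "maximum_matching V E N" and t: "t \<in> \<Union>M - \<Union>N"
  obtains N' where "maximum_matching V E N'" "\<Union>N' \<subseteq> insert t (\<Union>N)"
    "card (M \<inter> N) < card (M \<inter> N')"
proof -
  have mM: "matching V E M" and mN: "matching V E N" and cN: "card N = matching_number V E"
    using M N unfolding maximum_matching_def by auto
  obtain e where eM: "e \<in> M" and "t \<in> e" using t by blast
  have "e \<in> E" "e \<subseteq> V" using eM mM unfolding matching_def by auto
  then have "card e = 2" using E2 by simp
  then obtain r where e: "e = {t, r}" using \<open>t \<in> e\<close> by (rule card_2_doubletonE)
  have "r \<in> \<Union>N"
    using maximum_matching_covers_edge[OF fin N, of t r] \<open>e \<in> E\<close> \<open>e \<subseteq> V\<close> e t by simp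
  then obtain f where fN: "f \<in> N" and "r \<in> f" by blast
  have eN: "e \<notin> N" using t e by blast
  have "f \<notin> M"
    using matching_edges_eq[OF mM eM, of f r] eN fN \<open>r \<in> f\<close> e by blast
  define N' where "N' = insert e (N - {f})"
  have "e \<inter> \<Union>(N - {f}) = {}"
    using matching_edges_eq[OF mN fN, of _ r] t e \<open>r \<in> f\<close> by blast
  moreover have "matching V E (N - {f})" using mN by (rule matching_subset) blast
  ultimately have "matching V E N'"
    unfolding N'_def using \<open>e \<in> E\<close> \<open>e \<subseteq> V\<close> by (intro matching_insert)
  moreover have "card N' = card N"
  proof -
    have "card N' = Suc (card (N - {f}))" unfolding N'_def using finite_matching[OF fin mN] eN by simp
    also have "\<dots> = card N" using card_Suc_Diff1[OF finite_matching[OF fin mN] fN] .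
    finally show ?thesis .
  qed
  moreover have "\<Union>N' \<subseteq> insert t (\<Union>N)" unfolding N'_def using e \<open>r \<in> \<Union>N\<close> by blast
  moreover have "card (M \<inter> N') = Suc (card (M \<inter> N))"
  proof -
    have "M \<inter> N' = insert e (M \<inter> N)" unfolding N'_def using eM \<open>f \<notin> M\<close> by blast
    then show ?thesis using finite_matching[OF fin mM] eN by simp
  qed
  ultimately show ?thesis using that cN unfolding maximum_matching_def by simp
qed

lemma card_Union_maximum_matchings_Diff:
  assumes "finite V" "\<forall>e\<in>E. card e = 2" "maximum_matching V E M" "maximum_matching V E N"
  shows "card (\<Union>N - \<Union>M) = card (\<Union>M - \<Union>N)"
proof -
  have "card (\<Union>M) = card (\<Union>N)"
    using assms card_Union_matching[OF assms(1,2)] unfolding maximum_matching_def by simp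
  moreover have "finite (\<Union>M)" "finite (\<Union>N)"
    using assms finite_Union_matching unfolding maximum_matching_def by blast+
  ultimately show ?thesis by (simp add: card_Diff_subset_Int Int_commute)
qed

text \<open>Take \<open>N\<close> sharing as many edges with \<open>M\<close> as possible; an exchange at a vertex
  \<open>t \<noteq> w\<close> of \<open>\<Union>M - \<Union>N\<close> would share more.\<close>
lemma maximum_matching_avoiding_vertex:
  assumes fin: "finite V" and E2: "\<forall>e\<in>E. card e = 2"
    and M: "maximum_matching V E M" and "maximum_matching V E N0" "w \<notin> \<Union>N0"
  obtains N where "maximum_matching V E N" "w \<notin> \<Union>N" "\<Union>M - \<Union>N \<subseteq> {w}"
proof -
  define S where "S = {N. maximum_matching V E N \<and> w \<notin> \<Union>N}"
  have "N0 \<in> S" using assms(4,5) unfolding S_def by blast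
  moreover have "card (M \<inter> N) < Suc (card M)" for N
    using finite_matching[OF fin] M unfolding maximum_matching_def
    by (metis Int_lower1 card_mono le_imp_less_Suc)
  ultimately obtain N where "N \<in> S"
    and N_greatest: "\<And>N'. N' \<in> S \<Longrightarrow> card (M \<inter> N') \<le> card (M \<inter> N)"
    using ex_has_greatest_nat[of "\<lambda>N. N \<in> S" N0 "\<lambda>N. card (M \<inter> N)" "Suc (card M)"]
    by blast
  then have N: "maximum_matching V E N" "w \<notin> \<Union>N" unfolding S_def by auto
  have "t = w" if t: "t \<in> \<Union>M - \<Union>N" for t
  proof (rule ccontr)
    assume "t \<noteq> w"
    obtain N' where "maximum_matching V E N'" "\<Union>N' \<subseteq> insert t (\<Union>N)"
      and more: "card (M \<inter> N) < card (M \<inter> N')"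
      using maximum_matching_exchange[OF fin E2 M N(1) t] by blast
    then have "N' \<in> S" unfolding S_def using N(2) \<open>t \<noteq> w\<close> by blast
    then show False using N_greatest[of N'] more by simp
  qed
  then show ?thesis using that N by blast
qed

text \<open>Gallai's lemma. For uncovered \<open>u \<noteq> v\<close> at minimal distance over all maximum matchings, let
  \<open>w\<close> be the neighbour of \<open>u\<close> on a shortest path. A maximum matching \<open>N\<close> as above must cover
  both \<open>u\<close> and \<open>v\<close>; but \<open>N\<close> and \<open>M\<close> cover equally many vertices.\<close>
lemma maximum_matching_uncovered_connected_eq:
  assumes fin: "finite V" and E2: "\<forall>e\<in>E. card e = 2"
    and avoid: "\<forall>x\<in>V. \<exists>N. maximum_matching V E N \<and> x \<notin> \<Union>N"
    and "maximum_matching V E M" "u \<notin> \<Union>M" "v \<notin> \<Union>M" "(u, v) \<in> adj_minus V E {} ^^ k"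
  shows "u = v"
  using assms(4-)
proof (induction k arbitrary: M u v rule: less_induct)
  case (less k)
  let ?A = "adj_minus V E {}"
  have edge: "{a, b} \<in> E \<and> a \<in> V \<and> b \<in> V" if "(a, b) \<in> ?A" for a b
    using that unfolding adj_minus_def by simp
  show "u = v"
  proof (rule ccontr)
    assume "u \<noteq> v"
    then have "k \<noteq> 0" using less.prems(4) by (metis relpow_0_E)
    then obtain j where "k = Suc j" using not0_implies_Suc by blast
    then obtain w where uw: "(u, w) \<in> ?A" and wv: "(w, v) \<in> ?A ^^ j"
      using less.prems(4) by (metis relpow_Suc_D2)
    have "w \<in> \<Union>M"
      using maximum_matching_covers_edge[OF fin less.prems(1)] edge[OF uw] less.prems(2) by blast
    obtain N0 where N0: "maximum_matching V E N0" "w \<notin> \<Union>N0" using avoid edge[OF uw] by blast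
    obtain N where N: "maximum_matching V E N" "w \<notin> \<Union>N" "\<Union>M - \<Union>N \<subseteq> {w}"
      by (rule maximum_matching_avoiding_vertex[OF fin E2 less.prems(1) N0])
    have "u \<in> \<Union>N"
      using maximum_matching_covers_edge[OF fin N(1), of w u] edge[OF uw] N(2)
      by (simp add: insert_commute)
    moreover have "v \<in> \<Union>N"
    proof (rule ccontr)
      assume "v \<notin> \<Union>N"
      then have "w = v" using less.IH[of j N w v] N wv \<open>k = Suc j\<close> by simp
      then show False using \<open>w \<in> \<Union>M\<close> less.prems(3) by simp
    qed
    ultimately have "{u, v} \<subseteq> \<Union>N - \<Union>M" using less.prems(2,3) by blast
    moreover have "finite (\<Union>N - \<Union>M)"
      using finite_Union_matching[OF fin] N(1) unfolding maximum_matching_def by blast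
    ultimately have "card {u, v} \<le> card (\<Union>N - \<Union>M)" by (rule card_mono[rotated])
    also have "\<dots> = card (\<Union>M - \<Union>N)"
      using card_Union_maximum_matchings_Diff[OF fin E2 less.prems(1) N(1)] .
    also have "\<dots> \<le> card {w}" using N(3) by (rule card_mono[rotated]) simp
    finally show False using \<open>u \<noteq> v\<close> by simp
  qed
qed

lemma card_uncovered_component_le_1:
  assumes fin: "finite V" and E2: "\<forall>e\<in>E. card e = 2"
    and avoid: "\<forall>x\<in>V. \<exists>N. maximum_matching V E N \<and> x \<notin> \<Union>N"
    and M: "maximum_matching V E M" and C: "C \<in> components V E {}"
  shows "card (C - \<Union>M) \<le> 1"
proof -
  have "u = v" if "u \<in> C - \<Union>M" "v \<in> C - \<Union>M" for u v
  proof -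
    have "C = component V E {} u" "C = component V E {} v"
      using component_of_mem[OF C] that by auto
    then have "(u, v) \<in> (adj_minus V E {})\<^sup>*"
      using component_refl[of v V E "{}"] unfolding component_def by simp
    then obtain k where "(u, v) \<in> adj_minus V E {} ^^ k" by (metis rtrancl_power)
    then show "u = v"
      using maximum_matching_uncovered_connected_eq[OF fin E2 avoid M] that by blast
  qed
  then show ?thesis using finite_component[OF fin C] by (simp add: card_le_Suc0_iff_eq)
qed

lemma card_component_Int_Union_matching:
  assumes fin: "finite V" and E2: "\<forall>e\<in>E. card e = 2"
    and M: "matching V E M" and C: "C \<in> components V E {}"
  shows "card (C \<inter> \<Union>M) = 2 * card {e\<in>M. e \<subseteq> C}"
proof -
  have "e \<subseteq> C" if "e \<in> M" "a \<in> e" "a \<in> C" for e a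
  proof -
    have "e \<in> E" "e \<subseteq> V - {}" using that(1) M unfolding matching_def by auto
    then have "e \<subseteq> component V E {} a" using E2 that(2) by (intro edge_subset_component) auto
    then show ?thesis using component_of_mem[OF C that(3)] by simp
  qed
  then have "C \<inter> \<Union>M = \<Union>{e\<in>M. e \<subseteq> C}" by blast
  moreover have "matching V E {e\<in>M. e \<subseteq> C}" using M by (rule matching_subset) blast
  ultimately show ?thesis using card_Union_matching[OF fin E2] by simp
qed

text \<open>Since a maximum matching \<open>M\<close> leaves at most one vertex of each component uncovered,
  \<open>\<lfloor>|C|/2\<rfloor>\<close> is at most the number of edges of \<open>M\<close> inside \<open>C\<close>.\<close>
lemma sum_half_components_le_matching_number:
  assumes fin: "finite V" and E2: "\<forall>e\<in>E. card e = 2"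
    and avoid: "\<forall>x\<in>V. \<exists>N. maximum_matching V E N \<and> x \<notin> \<Union>N"
  shows "(\<Sum>C\<in>components V E {}. card C div 2) \<le> matching_number V E"
proof -
  obtain M where M: "maximum_matching V E M" using maximum_matching_exists[OF fin] by blast
  then have mM: "matching V E M" unfolding maximum_matching_def by simp
  have "card C div 2 \<le> card {e\<in>M. e \<subseteq> C}" if C: "C \<in> components V E {}" for C
  proof -
    have "card C = card (C \<inter> \<Union>M) + card (C - \<Union>M)"
      using finite_component[OF fin C] by (rule card_Int_Diff)
    then have "card C \<le> 2 * card {e\<in>M. e \<subseteq> C} + 1"
      using card_component_Int_Union_matching[OF fin E2 mM C]
        card_uncovered_component_le_1[OF fin E2 avoid M C] by simp
    then show ?thesis by simp
  qed
  then have "(\<Sum>C\<in>components V E {}. card C div 2) \<le> (\<Sum>C\<in>components V E {}. card {e\<in>M. e \<subseteq> C})"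
    by (rule sum_mono)
  also have "\<dots> = matching_number V E"
  proof -
    have "\<Union>M \<subseteq> V - {}" using mM unfolding matching_def by blast
    have "2 * (\<Sum>C\<in>components V E {}. card {e\<in>M. e \<subseteq> C})
        = (\<Sum>C\<in>components V E {}. card (C \<inter> \<Union>M))"
      unfolding sum_distrib_left using card_component_Int_Union_matching[OF fin E2 mM]
      by (intro sum.cong) simp_all
    also have "\<dots> = card (\<Union>M)" using \<open>\<Union>M \<subseteq> V - {}\<close> by (rule sum_card_Int_components[OF fin])
    also have "\<dots> = 2 * matching_number V E"
      using M card_Union_matching[OF fin E2] unfolding maximum_matching_def by simp
    finally show ?thesis by simp
  qed
  finally show ?thesis .
qed

text \<open>The nontrivial half of the Tutte--Berge formula. If some vertex \<open>v\<close> is covered by every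
  maximum matching, deleting it lowers the matching number and \<open>v\<close> joins the barrier found
  for \<open>G - v\<close>; otherwise Gallai's lemma shows that the empty set is a barrier.\<close>
lemma tutte_berge_barrier_exists:
  assumes "finite V" "\<forall>e\<in>E. card e = 2"
  obtains X where "X \<subseteq> V" "card X + (\<Sum>C\<in>components V E X. card C div 2) \<le> matching_number V E"
  using assms(1) that
proof (induction V arbitrary: thesis rule: finite_psubset_induct)
  case (psubset V)
  show ?case
  proof (cases "\<forall>x\<in>V. \<exists>N. maximum_matching V E N \<and> x \<notin> \<Union>N")
    case True
    then show ?thesis
      using psubset.prems[of "{}"] sum_half_components_le_matching_number[OF psubset.hyps(1) assms(2)]
      by simp
  next
    case False
    then obtain v where "v \<in> V" and v_covered: "\<And>N. maximum_matching V E N \<Longrightarrow> v \<in> \<Union>N" by blast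
    have fin': "finite (V - {v})" using psubset.hyps(1) by simp
    obtain N where N: "maximum_matching (V - {v}) E N" using maximum_matching_exists[OF fin'] by blast
    then have "matching V E N" "v \<notin> \<Union>N" unfolding maximum_matching_def matching_def by auto
    then have "matching_number (V - {v}) E < matching_number V E"
      using N v_covered card_le_matching_number[OF psubset.hyps(1)]
      unfolding maximum_matching_def by (metis le_neq_implies_less)
    moreover obtain X where X: "X \<subseteq> V - {v}"
      "card X + (\<Sum>C\<in>components (V - {v}) E X. card C div 2) \<le> matching_number (V - {v}) E"
      using psubset.IH[of "V - {v}"] \<open>v \<in> V\<close> by blast
    moreover have "card (insert v X) = Suc (card X)"
      using X(1) finite_subset[OF X(1) fin'] by (auto intro: card_insert_disjoint)
    ultimately have "card (insert v X) + (\<Sum>C\<in>components V E (insert v X). card C div 2)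
        \<le> matching_number V E"
      by (simp add: components_Diff_insert)
    moreover have "insert v X \<subseteq> V" using X(1) \<open>v \<in> V\<close> by blast
    ultimately show ?thesis using psubset.prems by blast
  qed
qed

lemma simple_graph_finite_edges: "simple_graph V E \<Longrightarrow> finite E"
  unfolding simple_graph_def by (meson PowI finite_Pow_iff finite_subset subsetI)

lemma card_edges_at_avoiding_le:
  assumes "simple_graph V E"
  shows "card {e\<in>E. x \<in> e \<and> e \<inter> F = {}} \<le> card (V - insert x F)"
proof -
  have "{e\<in>E. x \<in> e \<and> e \<inter> F = {}} \<subseteq> (\<lambda>v. {x, v}) ` (V - insert x F)"
  proof
    fix e assume e: "e \<in> {e\<in>E. x \<in> e \<and> e \<inter> F = {}}"
    then have "card e = 2" "e \<subseteq> V" using assms unfolding simple_graph_def by auto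
    then obtain v where "v \<noteq> x" "e = {x, v}" using e by (auto elim: card_2_doubletonE)
    then show "e \<in> (\<lambda>v. {x, v}) ` (V - insert x F)" using e \<open>e \<subseteq> V\<close> by blast
  qed
  moreover have "finite (V - insert x F)" using assms unfolding simple_graph_def by simp
  ultimately show ?thesis by (meson card_image_le card_mono finite_imageI le_trans)
qed

lemma card_edges_meeting_le:
  assumes "simple_graph V E" "X \<subseteq> V"
  shows "2 * card {e\<in>E. e \<inter> X \<noteq> {}} + card X * (card X + 1) \<le> 2 * card X * card V"
proof -
  have "finite X" using assms finite_subset unfolding simple_graph_def by blast
  then show ?thesis using assms(2)
  proof (induction X rule: finite_induct)
    case empty
    show ?case by simp
  next
    case (insert x F)
    have "card {e\<in>E. e \<inter> insert x F \<noteq> {}}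
        \<le> card ({e\<in>E. e \<inter> F \<noteq> {}} \<union> {e\<in>E. x \<in> e \<and> e \<inter> F = {}})"
      using simple_graph_finite_edges[OF assms(1)] by (intro card_mono) auto
    also have "\<dots> \<le> card {e\<in>E. e \<inter> F \<noteq> {}} + card {e\<in>E. x \<in> e \<and> e \<inter> F = {}}"
      by (rule card_Un_le)
    also have "\<dots> \<le> card {e\<in>E. e \<inter> F \<noteq> {}} + (card V - Suc (card F))"
      using card_edges_at_avoiding_le[OF assms(1), of x F] insert
      by (simp add: card_Diff_subset finite_subset)
    finally have step: "card {e\<in>E. e \<inter> insert x F \<noteq> {}}
        \<le> card {e\<in>E. e \<inter> F \<noteq> {}} + (card V - Suc (card F))" .
    have "Suc (card F) \<le> card V"
      using insert assms(1) card_mono unfolding simple_graph_def by (metis card_insert_disjoint)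
    then show ?case using insert step by (simp add: algebra_simps)
  qed
qed

text \<open>\<open>f\<close> glues the classes of \<open>r\<close> together at the single vertex \<open>0\<close> and is injective otherwise.\<close>
definition collapse_at_zero :: "'a set \<Rightarrow> ('a \<Rightarrow> 'b) \<Rightarrow> ('a \<Rightarrow> nat) \<Rightarrow> bool" where
  "collapse_at_zero V r f \<longleftrightarrow> (\<forall>u\<in>V. \<forall>v\<in>V. f u = f v \<longrightarrow> u = v \<or> (f u = 0 \<and> r u \<noteq> r v))"

lemma collapse_at_zeroD:
  "collapse_at_zero V r f \<Longrightarrow> u \<in> V \<Longrightarrow> v \<in> V \<Longrightarrow> f u = f v \<Longrightarrow> f u \<noteq> 0 \<or> r u = r v \<Longrightarrow> u = v"
  unfolding collapse_at_zero_def by metis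

text \<open>Keep the vertex \<open>root c\<close> of every class \<open>c\<close> at \<open>0\<close> and number all other vertices
  \<open>1, 2, \<dots>\<close>.\<close>
lemma collapse_at_zero_exists:
  assumes "finite V"
  obtains f where "collapse_at_zero V r f" "f ` V \<subseteq> {0..<Suc (card V - card (r ` V))}"
proof -
  define root where "root c = (SOME v. v \<in> V \<and> r v = c)" for c
  have root: "root c \<in> V \<and> r (root c) = c" if "c \<in> r ` V" for c
    unfolding root_def using that by (rule imageE) (rule someI, blast)
  define W where "W = V - root ` r ` V"
  have "inj_on root (r ` V)" using root by (metis inj_onI)
  then have "card (root ` r ` V) = card (r ` V)" by (rule card_image)
  moreover have "root ` r ` V \<subseteq> V" using root by blast
  ultimately have card_W: "card W = card V - card (r ` V)"
    unfolding W_def using assms by (metis card_Diff_subset finite_subset)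
  obtain h where h: "bij_betw h W {0..<card W}"
    using ex_bij_betw_finite_nat assms unfolding W_def by blast
  define f where "f v = (if v \<in> W then Suc (h v) else 0)" for v
  have "collapse_at_zero V r f" unfolding collapse_at_zero_def
  proof (intro ballI impI)
    fix u v assume "u \<in> V" "v \<in> V" "f u = f v"
    show "u = v \<or> (f u = 0 \<and> r u \<noteq> r v)"
    proof (cases "u \<in> W")
      case True
      then have "v \<in> W" "h u = h v" using \<open>f u = f v\<close> unfolding f_def by (auto split: if_splits)
      then show ?thesis using h True unfolding bij_betw_def by (auto dest: inj_onD)
    next
      case False
      then have "v \<notin> W" using \<open>f u = f v\<close> unfolding f_def by (auto split: if_splits)
      then have "u = root (r u)" "v = root (r v)"
        using \<open>u \<notin> W\<close> \<open>u \<in> V\<close> \<open>v \<in> V\<close> root unfolding W_def by auto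
      then show ?thesis using \<open>u \<notin> W\<close> unfolding f_def by auto
    qed
  qed
  moreover have "f ` V \<subseteq> {0..<Suc (card W)}"
    using h unfolding f_def bij_betw_def by auto
  ultimately show ?thesis using that card_W by simp
qed

lemma image_edge_lift:
  assumes "simple_graph V E" "{p, q} \<in> (\<lambda>e. f ` e) ` E"
  obtains x y where "{x, y} \<in> E" "f x = p" "f y = q"
proof -
  obtain e where "e \<in> E" "f ` e = {p, q}" using assms(2) by auto
  moreover obtain u v where "e = {u, v}"
    using \<open>e \<in> E\<close> assms(1) unfolding simple_graph_def by (metis card_2_iff)
  ultimately have "({u, v} \<in> E \<and> f u = p \<and> f v = q) \<or> ({v, u} \<in> E \<and> f v = p \<and> f u = q)"
    by (auto simp: doubleton_eq_iff insert_commute)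
  then show ?thesis using that by blast
qed

lemma exists_nonzero_mem:
  assumes "2 \<le> card (A :: nat set)" shows "\<exists>a\<in>A. a \<noteq> 0"
proof -
  have "\<not> A \<subseteq> {0}"
  proof
    assume "A \<subseteq> {0}"
    then have "card A \<le> card {0 :: nat}" by (intro card_mono) simp_all
    then show False using assms by simp
  qed
  then show ?thesis by blast
qed

lemma collapse_image_edge_lift:
  assumes G: "simple_graph V E" and edge_class: "\<And>u v. {u, v} \<in> E \<Longrightarrow> r u = r v"
    and f: "collapse_at_zero V r f" and "{f a, f b} \<in> (\<lambda>e. f ` e) ` E"
    and "a \<in> V" "b \<in> V" "r a = r b" "f a \<noteq> f b"
  shows "{a, b} \<in> E"
proof -
  obtain x y where xy: "{x, y} \<in> E" "f x = f a" "f y = f b"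
    using image_edge_lift[OF G assms(4)] by blast
  have "x \<in> V" "y \<in> V" "r x = r y" using G xy(1) edge_class unfolding simple_graph_def by auto
  then have "x = a \<and> y = b" using collapse_at_zeroD[OF f] xy assms(5-8) by metis
  then show ?thesis using xy(1) by simp
qed

lemma collapse_image_neighbour_lift:
  assumes G: "simple_graph V E" and edge_class: "\<And>u v. {u, v} \<in> E \<Longrightarrow> r u = r v"
    and f: "collapse_at_zero V r f" and "{p, f y0} \<in> (\<lambda>e. f ` e) ` E" "y0 \<in> V" "f y0 \<noteq> 0"
  obtains x where "x \<in> V" "r x = r y0" "f x = p"
proof -
  obtain x y where xy: "{x, y} \<in> E" "f x = p" "f y = f y0"
    using image_edge_lift[OF G assms(4)] by blast
  have "x \<in> V" "y \<in> V" "r x = r y" using G xy(1) edge_class unfolding simple_graph_def by auto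
  moreover have "y = y0" using collapse_at_zeroD[OF f \<open>y \<in> V\<close> \<open>y0 \<in> V\<close> xy(3)] xy(3) \<open>f y0 \<noteq> 0\<close> by simp
  ultimately show ?thesis using that xy(2) by simp
qed

text \<open>A copy of \<open>K\<^sub>l\<^sub>,\<^sub>t\<close> (with \<open>l, t \<ge> 2\<close>) in the collapsed graph uses two non-zero
  vertices \<open>a\<^sub>0 \<in> A\<close>, \<open>b\<^sub>0 \<in> B\<close>, which have unique preimages; the edges through them pull the whole
  copy back into a single class, on which \<open>f\<close> is injective.\<close>
lemma contains_Klt_of_collapse_image:
  assumes G: "simple_graph V E" and "2 \<le> l" "2 \<le> t"
    and edge_class: "\<And>u v. {u, v} \<in> E \<Longrightarrow> r u = r v"
    and f: "collapse_at_zero V r f"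
    and K: "contains_Klt U ((\<lambda>e. f ` e) ` E) l t"
  shows "contains_Klt V E l t"
proof -
  let ?H = "(\<lambda>e. f ` e) ` E"
  obtain A B where AB: "A \<inter> B = {}" "card A = l" "card B = t"
    and AB_H: "\<And>a b. a \<in> A \<Longrightarrow> b \<in> B \<Longrightarrow> {a, b} \<in> ?H"
    using K unfolding contains_Klt_def by blast
  obtain a0 b0 where "a0 \<in> A" "a0 \<noteq> 0" "b0 \<in> B" "b0 \<noteq> 0"
    using exists_nonzero_mem[of A] exists_nonzero_mem[of B] AB(2,3) \<open>2 \<le> l\<close> \<open>2 \<le> t\<close> by auto
  obtain x0 y0 where xy0: "{x0, y0} \<in> E" "f x0 = a0" "f y0 = b0"
    using image_edge_lift[OF G AB_H[OF \<open>a0 \<in> A\<close> \<open>b0 \<in> B\<close>]] by blast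
  then have "x0 \<in> V" "y0 \<in> V" "r x0 = r y0" using G edge_class unfolding simple_graph_def by auto
  define VK where "VK = {v\<in>V. r v = r y0}"
  define A' where "A' = {v\<in>VK. f v \<in> A}"
  define B' where "B' = {v\<in>VK. f v \<in> B}"
  have inj: "inj_on f VK"
    using collapse_at_zeroD[OF f] unfolding VK_def inj_on_def by auto
  have "A \<subseteq> f ` A'"
  proof
    fix a assume "a \<in> A"
    with AB_H \<open>b0 \<in> B\<close> xy0(3) obtain x where "x \<in> V" "r x = r y0" "f x = a"
      using collapse_image_neighbour_lift[OF G edge_class f _ \<open>y0 \<in> V\<close>] \<open>b0 \<noteq> 0\<close> by metis
    then show "a \<in> f ` A'" unfolding A'_def VK_def using \<open>a \<in> A\<close> by blast
  qed
  then have "f ` A' = A" unfolding A'_def by blast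
  have "B \<subseteq> f ` B'"
  proof
    fix b assume "b \<in> B"
    with AB_H \<open>a0 \<in> A\<close> xy0(2) obtain y where "y \<in> V" "r y = r x0" "f y = b"
      using collapse_image_neighbour_lift[OF G edge_class f _ \<open>x0 \<in> V\<close>] \<open>a0 \<noteq> 0\<close>
      by (metis insert_commute)
    then show "b \<in> f ` B'" unfolding B'_def VK_def using \<open>b \<in> B\<close> \<open>r x0 = r y0\<close> by auto
  qed
  then have "f ` B' = B" unfolding B'_def by blast
  with \<open>f ` A' = A\<close> have "card A' = l" "card B' = t"
    using AB(2,3) inj card_image[of f A'] card_image[of f B'] inj_on_subset[of f VK]
    unfolding A'_def B'_def by auto
  moreover have "{a, b} \<in> E" if "a \<in> A'" "b \<in> B'" for a b
  proof -
    have "f a \<in> A" "f b \<in> B" "a \<in> V" "b \<in> V" "r a = r b"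
      using that unfolding A'_def B'_def VK_def by auto
    moreover have "f a \<noteq> f b" using \<open>f a \<in> A\<close> \<open>f b \<in> B\<close> AB(1) by auto
    ultimately show ?thesis using collapse_image_edge_lift[OF G edge_class f AB_H] by simp
  qed
  moreover have "A' \<inter> B' = {}" using AB(1) unfolding A'_def B'_def by blast
  moreover have "A' \<subseteq> V" "B' \<subseteq> V" unfolding A'_def B'_def VK_def by auto
  ultimately show ?thesis unfolding contains_Klt_def by blast
qed

lemma card_le_ex_Klt:
  assumes "simple_graph {0..<m} H" "\<not> contains_Klt {0..<m} H l t"
  shows "card H \<le> ex_Klt m l t"
proof -
  have "{card E | E. simple_graph {0..<m} E \<and> \<not> contains_Klt {0..<m} E l t} \<subseteq> card ` Pow (Pow {0..<m})"
    unfolding simple_graph_def by auto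
  then have "finite {card E | E. simple_graph {0..<m} E \<and> \<not> contains_Klt {0..<m} E l t}"
    by (rule finite_subset) simp
  moreover have "card H \<in> {card E | E. simple_graph {0..<m} E \<and> \<not> contains_Klt {0..<m} E l t}"
    using assms by blast
  ultimately show ?thesis unfolding ex_Klt_def by (rule Max_ge)
qed

lemma card_le_ex_Klt_if_collapse:
  assumes G: "simple_graph V E" and noK: "\<not> contains_Klt V E l t" and "2 \<le> l" "2 \<le> t"
    and edge_class: "\<And>u v. {u, v} \<in> E \<Longrightarrow> r u = r v"
    and f: "collapse_at_zero V r f" and range: "f ` V \<subseteq> {0..<m}"
  shows "card E \<le> ex_Klt m l t"
proof -
  have edge: "u \<in> V \<and> v \<in> V \<and> u \<noteq> v" if "{u, v} \<in> E" for u v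
  proof -
    have "{u, v} \<subseteq> V \<and> card {u, v} = 2" using G that unfolding simple_graph_def by blast
    then show ?thesis by (cases "u = v") auto
  qed
  have E_doubleton: "\<exists>u v. e = {u, v} \<and> {u, v} \<in> E" if "e \<in> E" for e
    using G that unfolding simple_graph_def by (metis card_2_iff)
  have f_edge: "f u \<noteq> f v" if "{u, v} \<in> E" for u v
    using collapse_at_zeroD[OF f] edge[OF that] edge_class[OF that] by metis
  have "inj_on (\<lambda>e. f ` e) E"
  proof (rule inj_onI)
    fix e e' assume "e \<in> E" "e' \<in> E" and eq: "f ` e = f ` e'"
    obtain u v where e: "e = {u, v}" "{u, v} \<in> E" using E_doubleton[OF \<open>e \<in> E\<close>] by blast
    obtain u' v' where e': "e' = {u', v'}" "{u', v'} \<in> E" using E_doubleton[OF \<open>e' \<in> E\<close>] by blast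
    have "f u = f u' \<and> f v = f v' \<or> f u = f v' \<and> f v = f u'"
      using eq e e' by (auto simp: doubleton_eq_iff)
    moreover have "r u = r v" "r u' = r v'" using edge_class e(2) e'(2) by blast+
    moreover have "u \<in> V" "v \<in> V" "u' \<in> V" "v' \<in> V" using edge e(2) e'(2) by blast+
    moreover have "f u \<noteq> 0 \<or> f v \<noteq> 0" using f_edge[OF e(2)] by auto
    ultimately have "u = u' \<and> v = v' \<or> u = v' \<and> v = u'"
      using collapse_at_zeroD[OF f] by metis
    then show "e = e'" using e e' by auto
  qed
  then have "card E = card ((\<lambda>e. f ` e) ` E)" by (simp add: card_image)
  also have "\<dots> \<le> ex_Klt m l t"
  proof (rule card_le_ex_Klt)
    show "simple_graph {0..<m} ((\<lambda>e. f ` e) ` E)"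
      unfolding simple_graph_def using E_doubleton edge f_edge range by fastforce
    show "\<not> contains_Klt {0..<m} ((\<lambda>e. f ` e) ` E) l t"
      using contains_Klt_of_collapse_image[OF G \<open>2 \<le> l\<close> \<open>2 \<le> t\<close> edge_class f] noK by blast
  qed
  finally show ?thesis .
qed

lemma contains_Klt_mono:
  assumes "contains_Klt V' E' l t" "V' \<subseteq> V" "E' \<subseteq> E"
  shows "contains_Klt V E l t"
proof -
  obtain A B where "A \<subseteq> V'" "B \<subseteq> V'" "A \<inter> B = {}" "card A = l" "card B = t"
    "\<forall>a\<in>A. \<forall>b\<in>B. {a, b} \<in> E'"
    using assms(1) unfolding contains_Klt_def by blast
  then show ?thesis unfolding contains_Klt_def using assms(2,3)
    by (intro exI[of _ A] exI[of _ B]) auto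
qed

text \<open>Gluing the components of \<open>G - X\<close> together at one vertex each does not create a copy of
  \<open>K\<^sub>l\<^sub>,\<^sub>t\<close>, and leaves at most \<open>2k + 1\<close> vertices.\<close>
lemma card_edges_avoiding_le_ex_Klt:
  assumes G: "simple_graph V E" and noK: "\<not> contains_Klt V E l t" and "2 \<le> l" "2 \<le> t"
    and k: "(\<Sum>C\<in>components V E X. card C div 2) \<le> k"
  shows "card {e\<in>E. e \<inter> X = {}} \<le> ex_Klt (2 * k + 1) l t"
proof -
  have fin: "finite V" using G unfolding simple_graph_def by simp
  let ?E0 = "{e\<in>E. e \<inter> X = {}}"
  have G0: "simple_graph (V - X) ?E0" using G unfolding simple_graph_def by blast
  have noK0: "\<not> contains_Klt (V - X) ?E0 l t" using noK contains_Klt_mono by blast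
  have edge_class: "component V E X u = component V E X v" if "{u, v} \<in> ?E0" for u v
  proof -
    have "{u, v} \<in> E" "u \<in> V - X" "v \<in> V - X" using that G unfolding simple_graph_def by auto
    then show ?thesis using component_eq[OF edge_in_component] by metis
  qed
  obtain f where f: "collapse_at_zero (V - X) (component V E X) f"
    and range: "f ` (V - X) \<subseteq> {0..<Suc (card (V - X) - card (component V E X ` (V - X)))}"
    using collapse_at_zero_exists[of "V - X"] fin by blast
  have "card (V - X) = (\<Sum>C\<in>components V E X. card C)" using sum_card_components[OF fin] by simp
  also have "\<dots> \<le> (\<Sum>C\<in>components V E X. 2 * (card C div 2) + 1)" by (intro sum_mono) simp
  also have "\<dots> = 2 * (\<Sum>C\<in>components V E X. card C div 2) + card (components V E X)"
    unfolding sum.distrib sum_distrib_left by simp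
  also have "\<dots> \<le> 2 * k + card (components V E X)" using k by simp
  finally have "f ` (V - X) \<subseteq> {0..<2 * k + 1}" using range unfolding components_def by auto
  then show ?thesis
    using card_le_ex_Klt_if_collapse[OF G0 noK0 \<open>2 \<le> l\<close> \<open>2 \<le> t\<close> edge_class f] by blast
qed

lemma card_edges_le_barrier:
  assumes G: "simple_graph V E" and noK: "\<not> contains_Klt V E l t" and "2 \<le> l" "2 \<le> t"
    and "X \<subseteq> V" and "(\<Sum>C\<in>components V E X. card C div 2) \<le> k"
  shows "2 * card E + card X * (card X + 1) \<le> 2 * card X * card V + 2 * ex_Klt (2 * k + 1) l t"
proof -
  have "card E = card {e\<in>E. e \<inter> X = {}} + card {e\<in>E. e \<inter> X \<noteq> {}}"
    using card_Int_Diff[of E "{e. e \<inter> X = {}}"] simple_graph_finite_edges[OF G]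
    by (simp add: Int_def set_diff_eq)
  then show ?thesis
    using card_edges_avoiding_le_ex_Klt[OF G noK assms(3,4,6)] card_edges_meeting_le[OF G \<open>X \<subseteq> V\<close>]
    by linarith
qed

lemma matching_number_le_if_no_matching:
  assumes "finite V" "\<not> contains_matching E (Suc s)"
  shows "matching_number V E \<le> s"
proof (rule ccontr)
  assume "\<not> matching_number V E \<le> s"
  moreover obtain M where "maximum_matching V E M" using maximum_matching_exists[OF assms(1)] by blast
  ultimately obtain M' where "M' \<subseteq> M" "card M' = Suc s" "matching V E M"
    unfolding maximum_matching_def by (metis not_less_eq_eq obtain_subset_with_card_n)
  then have "matching V E M'" "finite M'"
    using matching_subset finite_matching[OF assms(1)] finite_subset by blast+
  then have "contains_matching E (Suc s)"
    using \<open>card M' = Suc s\<close> unfolding contains_matching_def matching_def by blast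
  then show False using assms(2) by simp
qed

lemma admissible_of_card_xG:
  assumes G: "simple_graph V E" and "\<not> contains_matching E (Suc s)"
  obtains X where "admissible V E s X" "card X = xG V E s"
proof -
  have fin: "finite V" using G unfolding simple_graph_def by simp
  have "\<forall>e\<in>E. card e = 2" using G unfolding simple_graph_def by blast
  then obtain X0 where "X0 \<subseteq> V"
    "card X0 + (\<Sum>C\<in>components V E X0. card C div 2) \<le> matching_number V E"
    using tutte_berge_barrier_exists[OF fin] by blast
  then have adm: "admissible V E s X0"
    using matching_number_le_if_no_matching[OF fin assms(2)] unfolding admissible_def by simp
  have "{card X | X. admissible V E s X} \<subseteq> {..card V}"
    unfolding admissible_def using card_mono[OF fin] by auto
  then have "finite {card X | X. admissible V E s X}" by (rule finite_subset) simp
  moreover have "{card X | X. admissible V E s X} \<noteq> {}" using adm by blast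
  ultimately have "xG V E s \<in> {card X | X. admissible V E s X}" unfolding xG_def by (rule Max_in)
  then show ?thesis using that by auto
qed

theorem lemma3p2:
  fixes l t s n :: nat and E :: "nat set set"
  assumes "n \<ge> 2 * s + 1" and "2 \<le> l" and "l \<le> t" and "s \<ge> l + 1"
    and "simple_graph {0..<n} E"
    and "\<not> contains_Klt {0..<n} E l t"
    and "\<not> contains_matching E (s + 1)"
    and "xG {0..<n} E s = l - 1"
  shows "int (card E) \<le> int (l - 1) * int n + int (ex_Klt (2 * (s - l + 1) + 1) l t)
                          - int (l * (l - 1) div 2)"
proof -
  have "\<not> contains_matching E (Suc s)" using assms(7) by simp
  then obtain X where X: "admissible {0..<n} E s X" "card X = xG {0..<n} E s"
    by (rule admissible_of_card_xG[OF assms(5)])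
  then have "card X = l - 1" "card X + 1 = l" using assms(2,8) by simp_all
  have "X \<subseteq> {0..<n}" "(\<Sum>C\<in>components {0..<n} E X. card C div 2) \<le> s - l + 1"
    using X(1) \<open>card X = l - 1\<close> assms(2,4) unfolding admissible_def by auto
  then have "2 * card E + card X * (card X + 1)
      \<le> 2 * card X * card {0..<n} + 2 * ex_Klt (2 * (s - l + 1) + 1) l t"
    using assms(2,3) by (intro card_edges_le_barrier[OF assms(5,6,2)]) simp_all
  from this[unfolded \<open>card X + 1 = l\<close>, unfolded \<open>card X = l - 1\<close>]
  have "2 * card E + (l - 1) * l \<le> 2 * (l - 1) * n + 2 * ex_Klt (2 * (s - l + 1) + 1) l t"
    by simp
  moreover have "(l - 1) * l = 2 * (l * (l - 1) div 2)"
    by (cases "even l") (auto simp: dvd_mult_div_cancel mult.commute)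
  ultimately have "card E + l * (l - 1) div 2 \<le> (l - 1) * n + ex_Klt (2 * (s - l + 1) + 1) l t"
    by (simp add: mult.assoc)
  then have "int (card E) + int (l * (l - 1) div 2)
      \<le> int (l - 1) * int n + int (ex_Klt (2 * (s - l + 1) + 1) l t)"
    by (metis of_nat_add of_nat_le_iff of_nat_mult)
  then show ?thesis by linarith
qed

end
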